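(* Let $n\geq 4$ and let $\nu: B_n\to GL_{n+1}(\mathbb{C})$ be a non-trivial homogeneous $3$-local representation of $B_n$. Then any homogeneous $3$-local extension $\nu':SM_n\to M_{n+1}(\mathbb{C})$ of $\nu$ to $SM_n$ is equivalent to one of the representations $\nu'_j$, $1\leq j\leq 8$, given for all $1\le i\le n-1$ by $\nu'_j(\sigma_i)=\mathrm{diag}(I_{i-1},M_j,I_{n-i-1})$ and $\nu'_j(\tau_i)=\mathrm{diag}(I_{i-1},N_j,I_{n-i-1})$, where (all entries complex): (1) $M_1=\begin{pmatrix} 1&0&0\\ 0&m_{22}&m_{23}\\ 0&\frac{1-m_{22}}{m_{23}}&0\end{pmatrix}$ with $m_{22}\neq1$, $m_{23}\neq0$, and (a) $N_1=\begin{pmatrix} 1&0&0\\ 0&n_{22}&m_{23}^2n_{32}\\ 0&n_{32}&n_{22}\end{pmatrix}$ if $m_{22}=0$; (b) $N_1=\begin{pmatrix} 1&0&0\\ 0&1-m_{23}n_{32}&\frac{-m_{23}^2n_{32}}{m_{22}-1}\\ 0&n_{32}&\frac{-1+m_{22}+m_{23}n_{32}}{m_{22}-1}\end{pmatrix}$ otherwise. (2) $M_2=\begin{pmatrix} 0&m_{12}&0\\ \frac{1-m_{22}}{m_{12}}&m_{22}&0\\ 0&0&1\end{pmatrix}$ with $m_{22}\neq1$, $m_{12}\neq0$, and (a) $N_2=\begin{pmatrix} n_{11}&m_{12}^2n_{21}&0\\ n_{21}&n_{11}&0\\ 0&0&1\end{pmatrix}$ if $m_{22}=0$; (b) $N_2=\begin{pmatrix}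 \frac{m_{12}n_{21}+m_{22}-1}{m_{22}-1}&-\frac{m_{12}^2n_{21}}{m_{22}-1}&0\\ n_{21}&1-m_{12}n_{21}&0\\ 0&0&1\end{pmatrix}$ otherwise. (3) $M_3=\begin{pmatrix} 1&\frac{-m_{22}}{m_{32}}&0\\ 0&m_{22}&0\\ 0&m_{32}&1\end{pmatrix}$ with $m_{22}m_{32}\neq0$, and $N_3=\begin{pmatrix} 1&n_{12}&0\\ 0&1-m_{32}n_{12}+\frac{m_{32}n_{12}}{m_{22}}&0\\ 0&-\frac{m_{32}^2n_{12}}{m_{22}}&1\end{pmatrix}$. (4) $M_4=\begin{pmatrix} 1&0&0\\ -\frac{m_{22}}{m_{23}}&m_{22}&m_{23}\\ 0&0&1\end{pmatrix}$ with $m_{23}m_{22}\neq0$, and $N_4=\begin{pmatrix} 1&0&0\\ n_{21}&1-m_{23}n_{21}+\frac{m_{23}n_{21}}{m_{22}}&-\frac{m_{23}^2n_{21}}{m_{22}}\\ 0&0&1\end{pmatrix}$. (5) $M_5=\begin{pmatrix} 1&0&0\\ 0&0&m_{23}\\ 0&m_{32}&1-m_{23}m_{32}\end{pmatrix}$ with $m_{23}m_{32}\neq0$, and (a) $N_5=\begin{pmatrix} 1&0&0\\ 0&n_{22}&n_{23}\\ 0&\frac{n_{23}}{m_{23}^2}&n_{22}\end{pmatrix}$ if $m_{32}m_{23}=1$; (b) $N_5=\begin{pmatrix} 1&0&0\\ 0&n_{22}&m_{23}-m_{23}n_{22}\\ 0&m_{32}-m_{32}n_{22}&m_{23}m_{32}(n_{22}-1)+1\end{pmatrix}$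 otherwise. (6) $M_6=\begin{pmatrix} 1-m_{12}m_{21}&m_{12}&0\\ m_{21}&0&0\\ 0&0&1\end{pmatrix}$ with $m_{12}m_{21}\neq0$, and (a) $N_6=\begin{pmatrix} n_{11}&n_{12}&0\\ \frac{n_{12}}{m_{12}^2}&n_{11}&0\\ 0&0&1\end{pmatrix}$ if $m_{12}m_{21}=1$; (b) $N_6=\begin{pmatrix} m_{12}m_{21}(n_{22}-1)+1&m_{12}-m_{12}n_{22}&0\\ m_{21}-m_{21}n_{22}&n_{22}&0\\ 0&0&1\end{pmatrix}$ otherwise. (7) $M_7=\begin{pmatrix} 1&0&0\\ 0&0&m_{23}\\ 0&m_{32}&0\end{pmatrix}$ with $m_{23}m_{32}\neq0$, and $N_7=\begin{pmatrix} 1&0&0\\ 0&n_{22}&n_{23}\\ 0&\frac{m_{32}n_{23}}{m_{23}}&n_{22}\end{pmatrix}$. (8) $M_8=\begin{pmatrix} 0&m_{12}&0\\ m_{21}&0&0\\ 0&0&1\end{pmatrix}$ with $m_{12}m_{21}\neq0$, and $N_8=\begin{pmatrix} n_{11}&n_{12}&0\\ \frac{m_{21}n_{12}}{m_{12}}&n_{11}&0\\ 0&0&1\end{pmatrix}$. Moreover, if $\nu'(\tau_i)$ is invertible for all $1\leq i\leq n-1$, then $\nu'$ is a representation of the singular braid group $SB_n$.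
   Context: The braid group $B_n$ has generators $\sigma_1,\dots,\sigma_{n-1}$ with relations $\sigma_i\sigma_{i+1}\sigma_i=\sigma_{i+1}\sigma_i\sigma_{i+1}$ ($1\le i\le n-2$) and $\sigma_i\sigma_j=\sigma_j\sigma_i$ ($|i-j|\ge2$). The singular braid monoid $SM_n$ is the monoid generated by $\sigma_1^{\pm1},\dots,\sigma_{n-1}^{\pm1},\tau_1,\dots,\tau_{n-1}$ subject to $\sigma_i\sigma_i^{-1}=\sigma_i^{-1}\sigma_i=1$, the braid relations above, and $\tau_i\tau_j=\tau_j\tau_i$, $\tau_i\sigma_j=\sigma_j\tau_i$ for $|i-j|\ge 2$, $\tau_i\sigma_i=\sigma_i\tau_i$ for $1\le i\le n-1$, and $\sigma_i\sigma_{i+1}\tau_i=\tau_{i+1}\sigma_i\sigma_{i+1}$, $\sigma_{i+1}\sigma_i\tau_{i+1}=\tau_i\sigma_{i+1}\sigma_i$ for $1\le i\le n-2$. The singular braid group $SB_n$ is the group with generators $\sigma_i,\tau_i$ and the same relations (into which $SM_n$ embeds). A representation of $SM_n$ is a monoid homomorphism into $M_{n+1}(\mathbb{C})$. A representation $\nu:B_n\to GL_{n+1}(\mathbb{C})$ is homogeneous $3$-local if there is $M\in M_3(\mathbb{C})$ with $\nu(\sigma_i)=\mathrm{diag}(I_{i-1},M,I_{n-i-1})$ for all $1\le i\le n-1$; "non-trivial" means not sending every $\sigma_i$ to the identity. A homogeneous $3$-local extension of $\nu$ to $SM_n$ is a representation $\nu':SM_n\to M_{n+1}(\mathbb{C})$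 with $\nu'(\sigma_i)=\nu(\sigma_i)$ and $\nu'(\tau_i)=\mathrm{diag}(I_{i-1},N,I_{n-i-1})$ for all $i$, for a single $N\in M_3(\mathbb{C})$. Two representations are equivalent if they are conjugate by a fixed invertible matrix. *)

theory Defs
  imports "Jordan_Normal_Form.Matrix"
begin

text \<open>Generators: Sg i = sigma_i, SgI i = sigma_i^-1, Tg i = tau_i, TgI i = tau_i^-1.
  Words over generators are lists; a word evaluates to the product of its letters.\<close>
datatype gen = Sg nat | SgI nat | Tg nat | TgI nat

definition idx :: "nat \<Rightarrow> nat set" where
  "idx n = {1..n-1}"

definition gens_B :: "nat \<Rightarrow> gen set" where
  "gens_B n = {Sg i | i. i \<in> idx n} \<union> {SgI i | i. i \<in> idx n}"

definition gens_SM :: "nat \<Rightarrow> gen set" where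
  "gens_SM n = gens_B n \<union> {Tg i | i. i \<in> idx n}"

definition gens_SB :: "nat \<Rightarrow> gen set" where
  "gens_SB n = gens_SM n \<union> {TgI i | i. i \<in> idx n}"

definition braid_rels :: "nat \<Rightarrow> (gen list \<times> gen list) set" where
  "braid_rels n =
     {([Sg i, SgI i], []) | i. i \<in> idx n} \<union> {([SgI i, Sg i], []) | i. i \<in> idx n}
   \<union> {([Sg i, Sg (i+1), Sg i], [Sg (i+1), Sg i, Sg (i+1)]) | i. 1 \<le> i \<and> i \<le> n - 2}
   \<union> {([Sg i, Sg j], [Sg j, Sg i]) | i j. i \<in> idx n \<and> j \<in> idx n \<and> (i + 2 \<le> j \<or> j + 2 \<le> i)}"

definition sm_rels :: "nat \<Rightarrow> (gen list \<times> gen list) set" where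
  "sm_rels n = braid_rels n
   \<union> {([Tg i, Tg j], [Tg j, Tg i]) | i j. i \<in> idx n \<and> j \<in> idx n \<and> (i + 2 \<le> j \<or> j + 2 \<le> i)}
   \<union> {([Tg i, Sg j], [Sg j, Tg i]) | i j. i \<in> idx n \<and> j \<in> idx n \<and> (i + 2 \<le> j \<or> j + 2 \<le> i)}
   \<union> {([Tg i, Sg i], [Sg i, Tg i]) | i. i \<in> idx n}
   \<union> {([Sg i, Sg (i+1), Tg i], [Tg (i+1), Sg i, Sg (i+1)]) | i. 1 \<le> i \<and> i \<le> n - 2}
   \<union> {([Sg (i+1), Sg i, Tg (i+1)], [Tg i, Sg (i+1), Sg i]) | i. 1 \<le> i \<and> i \<le> n - 2}"

definition sb_rels :: "nat \<Rightarrow> (gen list \<times> gen list) set" where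
  "sb_rels n = sm_rels n
   \<union> {([Tg i, TgI i], []) | i. i \<in> idx n} \<union> {([TgI i, Tg i], []) | i. i \<in> idx n}"

text \<open>A representation (monoid homomorphism into d x d complex matrices) of the monoid
  presented by generators A and relations R, given as a map on words over A:
  multiplicative, unital, and respecting every defining relation (equivalently, it
  factors through the quotient of the free monoid by the congruence generated by R).\<close>
definition is_pres_rep ::
  "gen set \<Rightarrow> (gen list \<times> gen list) set \<Rightarrow> nat \<Rightarrow> (gen list \<Rightarrow> complex mat) \<Rightarrow> bool" where
  "is_pres_rep A R d \<rho> \<longleftrightarrow>
     (\<forall>w \<in> lists A. \<rho> w \<in> carrier_mat d d) \<and>
     \<rho> [] = 1\<^sub>m d \<and>
     (\<forall>u \<in> lists A. \<forall>v \<in> lists A. \<rho> (u @ v) = \<rho> u * \<rho> v) \<and>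
     (\<forall>(u, v) \<in> R. \<rho> u = \<rho> v)"

text \<open>diag(I_{i-1}, M, I_{n-i-1}) as an (n+1) x (n+1) matrix (0-based rows i-1, i, i+1).\<close>
definition local3 :: "nat \<Rightarrow> nat \<Rightarrow> complex mat \<Rightarrow> complex mat" where
  "local3 n i M = mat (n+1) (n+1) (\<lambda>(r, c).
      if i - 1 \<le> r \<and> r < i + 2 \<and> i - 1 \<le> c \<and> c < i + 2
      then M $$ (r - (i - 1), c - (i - 1))
      else if r = c then 1 else 0)"

definition mat3 :: "complex \<Rightarrow> complex \<Rightarrow> complex \<Rightarrow> complex \<Rightarrow> complex \<Rightarrow> complex
   \<Rightarrow> complex \<Rightarrow> complex \<Rightarrow> complex \<Rightarrow> complex mat" where
  "mat3 a b c d e f g h k = mat_of_rows_list 3 [[a, b, c], [d, e, f], [g, h, k]]"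

definition family :: "nat \<Rightarrow> complex mat \<Rightarrow> complex mat \<Rightarrow> bool" where
  "family j M N \<longleftrightarrow>
   (j = 1 \<and> (\<exists>m22 m23 n22 n32. m22 \<noteq> 1 \<and> m23 \<noteq> 0 \<and>
      M = mat3 1 0 0  0 m22 m23  0 ((1 - m22) / m23) 0 \<and>
      (if m22 = 0 then N = mat3 1 0 0  0 n22 (m23^2 * n32)  0 n32 n22
       else N = mat3 1 0 0  0 (1 - m23 * n32) (- (m23^2 * n32) / (m22 - 1))
                     0 n32 ((-1 + m22 + m23 * n32) / (m22 - 1))))) \<or>
   (j = 2 \<and> (\<exists>m22 m12 n11 n21. m22 \<noteq> 1 \<and> m12 \<noteq> 0 \<and>
      M = mat3 0 m12 0  ((1 - m22) / m12) m22 0  0 0 1 \<and>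
      (if m22 = 0 then N = mat3 n11 (m12^2 * n21) 0  n21 n11 0  0 0 1
       else N = mat3 ((m12 * n21 + m22 - 1) / (m22 - 1)) (- (m12^2 * n21) / (m22 - 1)) 0
                     n21 (1 - m12 * n21) 0  0 0 1))) \<or>
   (j = 3 \<and> (\<exists>m22 m32 n12. m22 * m32 \<noteq> 0 \<and>
      M = mat3 1 (- m22 / m32) 0  0 m22 0  0 m32 1 \<and>
      N = mat3 1 n12 0  0 (1 - m32 * n12 + m32 * n12 / m22) 0  0 (- (m32^2 * n12) / m22) 1)) \<or>
   (j = 4 \<and> (\<exists>m22 m23 n21. m23 * m22 \<noteq> 0 \<and>
      M = mat3 1 0 0  (- m22 / m23) m22 m23  0 0 1 \<and>
      N = mat3 1 0 0  n21 (1 - m23 * n21 + m23 * n21 / m22) (- (m23^2 * n21) / m22)  0 0 1)) \<or>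
   (j = 5 \<and> (\<exists>m23 m32 n22 n23. m23 * m32 \<noteq> 0 \<and>
      M = mat3 1 0 0  0 0 m23  0 m32 (1 - m23 * m32) \<and>
      (if m32 * m23 = 1 then N = mat3 1 0 0  0 n22 n23  0 (n23 / m23^2) n22
       else N = mat3 1 0 0  0 n22 (m23 - m23 * n22)  0 (m32 - m32 * n22) (m23 * m32 * (n22 - 1) + 1)))) \<or>
   (j = 6 \<and> (\<exists>m12 m21 n11 n12 n22. m12 * m21 \<noteq> 0 \<and>
      M = mat3 (1 - m12 * m21) m12 0  m21 0 0  0 0 1 \<and>
      (if m12 * m21 = 1 then N = mat3 n11 n12 0  (n12 / m12^2) n11 0  0 0 1
       else N = mat3 (m12 * m21 * (n22 - 1) + 1) (m12 - m12 * n22) 0  (m21 - m21 * n22) n22 0  0 0 1))) \<or>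
   (j = 7 \<and> (\<exists>m23 m32 n22 n23. m23 * m32 \<noteq> 0 \<and>
      M = mat3 1 0 0  0 0 m23  0 m32 0 \<and>
      N = mat3 1 0 0  0 n22 n23  0 (m32 * n23 / m23) n22)) \<or>
   (j = 8 \<and> (\<exists>m12 m21 n11 n12. m12 * m21 \<noteq> 0 \<and>
      M = mat3 0 m12 0  m21 0 0  0 0 1 \<and>
      N = mat3 n11 n12 0  (m21 * n12 / m12) n11 0  0 0 1))"

definition equiv_to_local ::
  "nat \<Rightarrow> (gen list \<Rightarrow> complex mat) \<Rightarrow> complex mat \<Rightarrow> complex mat \<Rightarrow> bool" where
  "equiv_to_local n \<rho> M N \<longleftrightarrow>
     (\<exists>P Q. P \<in> carrier_mat (n+1) (n+1) \<and> Q \<in> carrier_mat (n+1) (n+1) \<and>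
        P * Q = 1\<^sub>m (n+1) \<and> Q * P = 1\<^sub>m (n+1) \<and>
        (\<forall>i \<in> idx n. \<rho> [Sg i] = P * local3 n i M * Q \<and> \<rho> [Tg i] = P * local3 n i N * Q))"

end

theory Submission
  imports Defs "Jordan_Normal_Form.Determinant"
begin

text \<open>A relation of \<open>SM\<^sub>n\<close> between homogeneous 3-local matrices involves at most five
  consecutive coordinates, and outside them all matrices are the identity; so it can be checked
  in dimension at most 5. There, writing \<open>M\<close> and \<open>N\<close> entrywise, the far commutation
  \<open>\<sigma>\<^sub>1\<sigma>\<^sub>3 = \<sigma>\<^sub>3\<sigma>\<^sub>1\<close> makes \<open>M\<close> either block diagonal or the identity outside its middle
  row or column, and the braid relation, together with \<open>det M \<noteq> 0\<close> and \<open>M \<noteq> 1\<close>, leaves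
  exactly the shapes \<open>M\<^sub>1, \<dots>, M\<^sub>8\<close>. For each shape the three relations involving \<open>\<tau>\<close> are linear in the entries of \<open>N\<close>: the rows and
  columns in which \<open>M\<close> agrees with the identity are inherited by \<open>N\<close>, and the remaining
  equations solve to \<open>N\<^sub>j\<close>. Hence \<open>\<nu>'\<close> is literally one of the \<open>\<nu>'\<^sub>j\<close>, and the equivalence is
  realized by the identity matrix. If all \<open>\<nu>'(\<tau>\<^sub>i)\<close> are invertible, sending the formal inverses
  \<open>\<tau>\<^sub>i\<^sup>-\<^sup>1\<close> to the matrix inverses extends \<open>\<nu>'\<close> to \<open>SB\<^sub>n\<close>.\<close>

lemma mat3_carrier [simp]: "mat3 a b c d e f g h k \<in> carrier_mat 3 3"
  by (simp add: mat3_def mat_of_rows_list_def numeral_3_eq_3)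

lemma dim_mat3 [simp]:
  "dim_row (mat3 a b c d e f g h k) = 3" "dim_col (mat3 a b c d e f g h k) = 3"
  using mat3_carrier by blast+

lemma index_mat3 [simp]:
  "i < 3 \<Longrightarrow> j < 3 \<Longrightarrow>
     mat3 a b c d e f g h k $$ (i, j) = [[a, b, c], [d, e, f], [g, h, k]] ! i ! j"
  by (simp add: mat3_def mat_of_rows_list_def)

lemma mat3_eq_iff:
  "mat3 a b c d e f g h k = mat3 a' b' c' d' e' f' g' h' k' \<longleftrightarrow>
     a = a' \<and> b = b' \<and> c = c' \<and> d = d' \<and> e = e' \<and> f = f' \<and> g = g' \<and> h = h' \<and> k = k'"
proof
  assume "mat3 a b c d e f g h k = mat3 a' b' c' d' e' f' g' h' k'"
  then have "\<forall>i<3. \<forall>j<3. mat3 a b c d e f g h k $$ (i, j) = mat3 a' b' c' d' e' f' g' h' k' $$ (i, j)"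
    by simp
  then show "a = a' \<and> b = b' \<and> c = c' \<and> d = d' \<and> e = e' \<and> f = f' \<and> g = g' \<and> h = h' \<and> k = k'"
    by (simp add: numeral_3_eq_3 All_less_Suc)
qed simp

lemma carrier_mat_3_3_cases:
  assumes "M \<in> carrier_mat 3 3"
  obtains a b c d e f g h k where "M = mat3 a b c d e f g h k"
proof
  show "M = mat3 (M $$ (0, 0)) (M $$ (0, 1)) (M $$ (0, 2)) (M $$ (1, 0)) (M $$ (1, 1))
      (M $$ (1, 2)) (M $$ (2, 0)) (M $$ (2, 1)) (M $$ (2, 2))"
    using assms by (intro eq_matI) (auto simp: less_Suc_eq numeral_3_eq_3 numeral_2_eq_2)
qed

lemma mat3_one: "mat3 1 0 0 0 1 0 0 0 1 = 1\<^sub>m 3"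
  by (rule eq_matI) (auto simp: less_Suc_eq numeral_3_eq_3)

lemma det_mat3:
  "det (mat3 a b c d e f g h k) = a*e*k - a*f*h - b*d*k + b*f*g + c*d*h - c*e*g"
proof -
  have "det (mat3 a b c d e f g h k) =
      (\<Sum>j<3. mat3 a b c d e f g h k $$ (0, j) * cofactor (mat3 a b c d e f g h k) 0 j)"
    by (rule laplace_expansion_row[OF mat3_carrier]) simp
  also have "\<dots> = a*e*k - a*f*h - b*d*k + b*f*g + c*d*h - c*e*g"
    apply (simp add: cofactor_def eval_nat_numeral)
    apply (subst (1 2 3) laplace_expansion_row[of _ 2 0])
    apply (auto simp: mat_delete_def cofactor_def det_single eval_nat_numeral algebra_simps)
    done
  finally show ?thesis .
qed

definition pad_id :: "nat \<Rightarrow> 'a :: {zero, one} mat \<Rightarrow> 'a mat" where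
  "pad_id k A = four_block_mat A (0\<^sub>m (dim_row A) k) (0\<^sub>m k (dim_col A)) (1\<^sub>m k)"

lemma pad_id_mult:
  assumes "dim_row A = dim_col A" "dim_row B = dim_col B" "dim_col A = dim_row B"
  shows "pad_id k A * pad_id k (B :: 'a :: semiring_1 mat) = pad_id k (A * B)"
proof -
  define n where "n = dim_row A"
  have dims: "dim_row A = n" "dim_col A = n" "dim_row B = n" "dim_col B = n"
    using assms unfolding n_def by auto
  then have car: "A \<in> carrier_mat n n" "B \<in> carrier_mat n n" by auto
  have "pad_id k A * pad_id k B = four_block_mat (A * B + 0\<^sub>m n k * 0\<^sub>m k n)
      (A * 0\<^sub>m n k + 0\<^sub>m n k * 1\<^sub>m k) (0\<^sub>m k n * B + 1\<^sub>m k * 0\<^sub>m k n)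
      (0\<^sub>m k n * 0\<^sub>m n k + 1\<^sub>m k * 1\<^sub>m k)"
    unfolding pad_id_def dims by (intro mult_four_block_mat) (use car in auto)
  also have "\<dots> = pad_id k (A * B)"
    using car by (simp add: pad_id_def)
  finally show ?thesis .
qed

lemma pad_id_inject:
  assumes "dim_row A = dim_row B" "dim_col A = dim_col B"
  shows "pad_id k A = pad_id k B \<longleftrightarrow> A = B"
proof
  assume eq: "pad_id k A = pad_id k B"
  show "A = B"
  proof (rule eq_matI)
    fix i j assume "i < dim_row B" "j < dim_col B"
    then show "A $$ (i, j) = B $$ (i, j)"
      using arg_cong[OF eq, of "\<lambda>X. X $$ (i, j)"] assms by (simp add: pad_id_def)
  qed (use assms in auto)
qed simp

lemma det_pad_id: "A \<in> carrier_mat n n \<Longrightarrow> det (pad_id k (A :: 'a :: idom mat)) = det A"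
  unfolding pad_id_def by (subst det_four_block_mat_upper_right_zero) auto

lemma local3_carrier [simp]: "local3 n i X \<in> carrier_mat (n + 1) (n + 1)"
  by (simp add: local3_def)

lemma dim_local3 [simp]: "dim_row (local3 n i X) = n + 1" "dim_col (local3 n i X) = n + 1"
  by (simp_all add: local3_def)

lemma local3_pad_id:
  assumes "1 \<le> i" "i + 1 \<le> m"
  shows "local3 (m + k) i X = pad_id k (local3 m i X)"
  by (rule eq_matI) (use assms in \<open>auto simp: pad_id_def local3_def\<close>)

lemma local3_2_1: "X \<in> carrier_mat 3 3 \<Longrightarrow> local3 2 1 X = X"
  by (rule eq_matI) (auto simp: local3_def)

lemma local3_1_pad_id:
  assumes "2 \<le> n" "X \<in> carrier_mat 3 3"
  shows "local3 n 1 X = pad_id (n - 2) X"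
proof -
  have "2 + (n - 2) = n" using assms(1) by simp
  then have "local3 n 1 X = local3 (2 + (n - 2)) 1 X" by (simp only:)
  also have "\<dots> = pad_id (n - 2) X" using local3_pad_id[of 1 2] local3_2_1[OF assms(2)] by simp
  finally show ?thesis .
qed

lemma local3_one: "local3 n i (1\<^sub>m 3) = 1\<^sub>m (n + 1)"
  by (rule eq_matI) (auto simp: local3_def)

lemma invertible_mat_obtain_inverse:
  assumes "invertible_mat A" "A \<in> carrier_mat n n"
  obtains B where "B \<in> carrier_mat n n" "A * B = 1\<^sub>m n" "B * A = 1\<^sub>m n"
proof -
  from assms obtain B where AB: "inverts_mat A B" and BA: "inverts_mat B A"
    unfolding invertible_mat_def by blast
  have "dim_row B = n" "dim_col B = n"
    using arg_cong[OF AB[unfolded inverts_mat_def], of dim_col]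
      arg_cong[OF BA[unfolded inverts_mat_def], of dim_col] assms(2) by auto
  with AB BA assms(2) show ?thesis
    by (intro that[of B]) (auto simp: inverts_mat_def)
qed

lemma invertible_mat_some_inverse:
  assumes "invertible_mat A" "A \<in> carrier_mat n n"
  defines "B \<equiv> SOME B. B \<in> carrier_mat n n \<and> A * B = 1\<^sub>m n \<and> B * A = 1\<^sub>m n"
  shows "B \<in> carrier_mat n n \<and> A * B = 1\<^sub>m n \<and> B * A = 1\<^sub>m n"
  unfolding B_def
  by (rule someI_ex) (meson invertible_mat_obtain_inverse[OF assms(1,2)])

lemma invertible_mat_det_nonzero:
  assumes "invertible_mat A" "A \<in> carrier_mat n n"
  shows "det (A :: 'a :: comm_ring_1 mat) \<noteq> 0"
proof -
  obtain B where "B \<in> carrier_mat n n" "A * B = 1\<^sub>m n"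
    using invertible_mat_obtain_inverse[OF assms] by metis
  then have "det A * det B = 1"
    using det_mult[OF assms(2)] by (metis det_one)
  then show ?thesis by auto
qed

section \<open>Representations given on generators\<close>

definition word_eval :: "('g \<Rightarrow> 'a :: semiring_1 mat) \<Rightarrow> nat \<Rightarrow> 'g list \<Rightarrow> 'a mat" where
  "word_eval img d w = foldr (\<lambda>g P. img g * P) w (1\<^sub>m d)"

lemma word_eval_Nil [simp]: "word_eval img d [] = 1\<^sub>m d"
  by (simp add: word_eval_def)

lemma word_eval_Cons [simp]: "word_eval img d (g # w) = img g * word_eval img d w"
  by (simp add: word_eval_def)

lemma word_eval_carrier:
  "img ` A \<subseteq> carrier_mat d d \<Longrightarrow> w \<in> lists A \<Longrightarrow> word_eval img d w \<in> carrier_mat d d"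
  by (induction w) auto

lemma word_eval_append:
  assumes "img ` A \<subseteq> carrier_mat d d" "u \<in> lists A" "v \<in> lists A"
  shows "word_eval img d (u @ v) = word_eval img d u * word_eval img d v"
  using assms(2)
proof (induction u)
  case Nil
  then show ?case using word_eval_carrier[OF assms(1,3)] by simp
next
  case (Cons g u)
  then have "img g \<in> carrier_mat d d" using assms(1) by auto
  with Cons show ?case
    using word_eval_carrier[OF assms(1)] assms(3) by (simp add: assoc_mult_mat[of _ d d _ d _ d])
qed

lemma is_pres_rep_word_eval:
  assumes "img ` A \<subseteq> carrier_mat d d"
    and "\<And>u v. (u, v) \<in> R \<Longrightarrow> word_eval img d u = word_eval img d v"
  shows "is_pres_rep A R d (word_eval img d)"
  unfolding is_pres_rep_def
  using assms word_eval_carrier[OF assms(1)] word_eval_append[OF assms(1)] by auto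

lemma is_pres_rep_eq_word_eval:
  assumes rep: "is_pres_rep A R d \<rho>" and img: "\<And>g. g \<in> A \<Longrightarrow> img g = \<rho> [g]"
  shows "w \<in> lists A \<Longrightarrow> \<rho> w = word_eval img d w"
proof (induction w)
  case (Cons g w)
  have "\<forall>u \<in> lists A. \<forall>v \<in> lists A. \<rho> (u @ v) = \<rho> u * \<rho> v"
    using rep by (simp add: is_pres_rep_def)
  moreover have "[g] \<in> lists A" "w \<in> lists A" using Cons.prems by auto
  ultimately have "\<rho> ([g] @ w) = \<rho> [g] * \<rho> w" by blast
  then show ?case using Cons img by simp
qed (use rep in \<open>simp add: is_pres_rep_def\<close>)

lemma equiv_to_local_refl:
  assumes "\<forall>i \<in> idx n. \<rho> [Sg i] = local3 n i M \<and> \<rho> [Tg i] = local3 n i N"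
  shows "equiv_to_local n \<rho> M N"
proof -
  have "local3 n i X = 1\<^sub>m (n + 1) * local3 n i X * 1\<^sub>m (n + 1)" for i X
    using local3_carrier[of n i X] by simp
  then show ?thesis
    using assms unfolding equiv_to_local_def by (intro exI[of _ "1\<^sub>m (n + 1)"]) auto
qed

lemma is_pres_rep_relD:
  assumes "is_pres_rep A R d \<rho>" "(u, v) \<in> R"
  shows "\<rho> u = \<rho> v"
proof -
  have "\<forall>(u, v) \<in> R. \<rho> u = \<rho> v" using assms(1) by (simp add: is_pres_rep_def)
  from bspec[OF this assms(2)] show ?thesis by simp
qed

lemma sm_rels_lists:
  assumes "(u, v) \<in> sm_rels n"
  shows "u \<in> lists (gens_SM n) \<and> v \<in> lists (gens_SM n)"
proof -
  have "i \<in> idx n" "Suc i \<in> idx n" if "1 \<le> i" "i \<le> n - 2" for i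
    using that by (auto simp: idx_def)
  with assms show ?thesis by (auto simp: sm_rels_def braid_rels_def gens_SM_def gens_B_def)
qed

lemma sb_rels_cases:
  assumes "(u, v) \<in> sb_rels n"
  shows "(u, v) \<in> sm_rels n \<or> (\<exists>i \<in> idx n. (u, v) = ([Tg i, TgI i], []) \<or> (u, v) = ([TgI i, Tg i], []))"
  using assms by (auto simp: sb_rels_def)

lemma is_pres_rep_sb_extension:
  assumes rep: "is_pres_rep (gens_SM n) (sm_rels n) d \<rho>"
    and inv: "\<forall>i \<in> idx n. invertible_mat (\<rho> [Tg i])"
  shows "\<exists>\<rho>'. is_pres_rep (gens_SB n) (sb_rels n) d \<rho>' \<and> (\<forall>w \<in> lists (gens_SM n). \<rho>' w = \<rho> w)"
proof -
  have car: "\<rho> w \<in> carrier_mat d d" if "w \<in> lists (gens_SM n)" for w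
    using rep that by (simp add: is_pres_rep_def)
  have tau_car: "\<rho> [Tg i] \<in> carrier_mat d d" if "i \<in> idx n" for i
    using car that by (simp add: gens_SM_def)
  define inv_tau where
    "inv_tau i = (SOME B. B \<in> carrier_mat d d \<and> \<rho> [Tg i] * B = 1\<^sub>m d \<and> B * \<rho> [Tg i] = 1\<^sub>m d)"
    for i
  have inv_tau: "inv_tau i \<in> carrier_mat d d \<and> \<rho> [Tg i] * inv_tau i = 1\<^sub>m d \<and>
      inv_tau i * \<rho> [Tg i] = 1\<^sub>m d" if "i \<in> idx n" for i
    unfolding inv_tau_def using inv tau_car that by (intro invertible_mat_some_inverse) auto
  define img where "img g = (case g of TgI i \<Rightarrow> inv_tau i | _ \<Rightarrow> \<rho> [g])" for g
  have img_SM: "img g = \<rho> [g]" if "g \<in> gens_SM n" for g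
    using that by (auto simp: img_def gens_SM_def gens_B_def)
  have agree: "word_eval img d w = \<rho> w" if "w \<in> lists (gens_SM n)" for w
    using is_pres_rep_eq_word_eval[OF rep img_SM that] by simp
  have "is_pres_rep (gens_SB n) (sb_rels n) d (word_eval img d)"
  proof (rule is_pres_rep_word_eval)
    show "img ` gens_SB n \<subseteq> carrier_mat d d"
      using car inv_tau img_SM by (auto simp: gens_SB_def img_def)
    show "word_eval img d u = word_eval img d v" if "(u, v) \<in> sb_rels n" for u v
      using sb_rels_cases[OF that]
    proof
      assume uv: "(u, v) \<in> sm_rels n"
      with sm_rels_lists show ?thesis
        using agree is_pres_rep_relD[OF rep uv] by simp
    next
      assume "\<exists>i \<in> idx n. (u, v) = ([Tg i, TgI i], []) \<or> (u, v) = ([TgI i, Tg i], [])"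
      then obtain i where i: "i \<in> idx n"
        and "(u, v) = ([Tg i, TgI i], []) \<or> (u, v) = ([TgI i, Tg i], [])"
        by blast
      then consider "u = [Tg i, TgI i]" "v = []" | "u = [TgI i, Tg i]" "v = []"
        by blast
      moreover have "inv_tau i * 1\<^sub>m d = inv_tau i" "\<rho> [Tg i] * 1\<^sub>m d = \<rho> [Tg i]"
        using inv_tau[OF i] tau_car[OF i] by auto
      ultimately show ?thesis using inv_tau[OF i] by cases (simp_all add: img_def)
    qed
  qed
  then show ?thesis using agree by blast
qed

section \<open>The relations of homogeneous 3-local representations\<close>

text \<open>Each relation of \<open>SM\<^sub>n\<close> between homogeneous 3-local matrices is stated in the smallest
  dimension containing the strands it involves; by \<open>local3_pad_id\<close> nothing is lost for
  \<open>n \<ge> 4\<close>.\<close>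

definition braid_local_relations :: "complex mat \<Rightarrow> bool" where
  "braid_local_relations M \<longleftrightarrow>
     local3 4 1 M * local3 4 3 M = local3 4 3 M * local3 4 1 M \<and>
     local3 3 1 M * (local3 3 2 M * local3 3 1 M) = local3 3 2 M * (local3 3 1 M * local3 3 2 M)"

definition singular_local_relations :: "complex mat \<Rightarrow> complex mat \<Rightarrow> bool" where
  "singular_local_relations M N \<longleftrightarrow>
     N * M = M * N \<and>
     local3 3 1 M * (local3 3 2 M * local3 3 1 N) = local3 3 2 N * (local3 3 1 M * local3 3 2 M) \<and>
     local3 3 2 M * (local3 3 1 M * local3 3 2 N) = local3 3 1 N * (local3 3 2 M * local3 3 1 M)"

lemma braid_local_relationsD:
  assumes "braid_local_relations M"
  shows "local3 4 1 M * local3 4 3 M = local3 4 3 M * local3 4 1 M"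
    "local3 3 1 M * (local3 3 2 M * local3 3 1 M) = local3 3 2 M * (local3 3 1 M * local3 3 2 M)"
  using assms by (simp_all add: braid_local_relations_def)

lemma singular_local_relationsD:
  assumes "singular_local_relations M N"
  shows "N * M = M * N"
    "local3 3 1 M * (local3 3 2 M * local3 3 1 N) = local3 3 2 N * (local3 3 1 M * local3 3 2 M)"
    "local3 3 2 M * (local3 3 1 M * local3 3 2 N) = local3 3 1 N * (local3 3 2 M * local3 3 1 M)"
  using assms by (simp_all add: singular_local_relations_def)

lemma sm_rels_instances:
  assumes "4 \<le> n"
  shows "([Sg 1, Sg 3], [Sg 3, Sg 1]) \<in> sm_rels n"
    "([Sg 1, Sg 2, Sg 1], [Sg 2, Sg 1, Sg 2]) \<in> sm_rels n"
    "([Tg 1, Sg 1], [Sg 1, Tg 1]) \<in> sm_rels n"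
    "([Sg 1, Sg 2, Tg 1], [Tg 2, Sg 1, Sg 2]) \<in> sm_rels n"
    "([Sg 2, Sg 1, Tg 2], [Tg 1, Sg 2, Sg 1]) \<in> sm_rels n"
  using assms by (auto simp: sm_rels_def braid_rels_def idx_def)

lemma local_relations_of_rep:
  assumes n: "4 \<le> n"
    and rep: "is_pres_rep (gens_SM n) (sm_rels n) (n + 1) \<rho>"
    and gen: "\<forall>i \<in> idx n. \<rho> [Sg i] = local3 n i M \<and> \<rho> [Tg i] = local3 n i N"
    and M: "M \<in> carrier_mat 3 3" and N: "N \<in> carrier_mat 3 3"
  shows "braid_local_relations M" "singular_local_relations M N"
proof -
  have rel: "word_eval (\<lambda>g. \<rho> [g]) (n + 1) u = word_eval (\<lambda>g. \<rho> [g]) (n + 1) v"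
    if "(u, v) \<in> sm_rels n" for u v
  proof -
    have "\<rho> w = word_eval (\<lambda>g. \<rho> [g]) (n + 1) w" if "w \<in> lists (gens_SM n)" for w
      by (rule is_pres_rep_eq_word_eval[OF rep _ that]) simp
    then show ?thesis
      using is_pres_rep_relD[OF rep that] sm_rels_lists[OF that] by metis
  qed
  have "1 \<in> idx n" "2 \<in> idx n" "3 \<in> idx n" using n by (auto simp: idx_def)
  then have val: "\<rho> [Sg 1] = local3 n 1 M" "\<rho> [Sg 2] = local3 n 2 M" "\<rho> [Sg 3] = local3 n 3 M"
      "\<rho> [Tg 1] = local3 n 1 N" "\<rho> [Tg 2] = local3 n 2 N"
    using gen by auto
  have one: "local3 n i X * 1\<^sub>m (n + 1) = local3 n i X" for i X
    using local3_carrier[of n i X] by simp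
  \<comment> \<open>\<open>simp only\<close>: the simplifier would rewrite the index \<open>1\<close> to \<open>Suc 0\<close> before \<open>val\<close>
    could apply.\<close>
  have E: "local3 n 1 M * local3 n 3 M = local3 n 3 M * local3 n 1 M"
    "local3 n 1 M * (local3 n 2 M * local3 n 1 M) = local3 n 2 M * (local3 n 1 M * local3 n 2 M)"
    "local3 n 1 N * local3 n 1 M = local3 n 1 M * local3 n 1 N"
    "local3 n 1 M * (local3 n 2 M * local3 n 1 N) = local3 n 2 N * (local3 n 1 M * local3 n 2 M)"
    "local3 n 2 M * (local3 n 1 M * local3 n 2 N) = local3 n 1 N * (local3 n 2 M * local3 n 1 M)"
    using rel[OF sm_rels_instances(1)[OF n]] rel[OF sm_rels_instances(2)[OF n]]
      rel[OF sm_rels_instances(3)[OF n]] rel[OF sm_rels_instances(4)[OF n]]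
      rel[OF sm_rels_instances(5)[OF n]]
    by (simp_all only: word_eval_Cons word_eval_Nil val one)
  have pad4: "local3 n i X = pad_id (n - 4) (local3 4 i X)" if "i \<in> {1, 2, 3}" for i X
    using local3_pad_id[of i 4 "n - 4" X] that n by auto
  have pad3: "local3 n i X = pad_id (n - 3) (local3 3 i X)" if "i \<in> {1, 2}" for i X
    using local3_pad_id[of i 3 "n - 3" X] that n by auto
  have n2: "2 \<le> n" using n by simp
  have "local3 4 1 M * local3 4 3 M = local3 4 3 M * local3 4 1 M"
    using E(1) by (simp add: pad4 pad_id_mult pad_id_inject)
  moreover have "local3 3 1 M * (local3 3 2 M * local3 3 1 M) =
      local3 3 2 M * (local3 3 1 M * local3 3 2 M)"
    using E(2) by (simp add: pad3 pad_id_mult pad_id_inject)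
  ultimately show "braid_local_relations M"
    by (simp add: braid_local_relations_def)
  have "N * M = M * N"
    using E(3) unfolding local3_1_pad_id[OF n2 M] local3_1_pad_id[OF n2 N]
    by (simp add: pad_id_mult pad_id_inject carrier_matD[OF M] carrier_matD[OF N])
  with E(4,5) show "singular_local_relations M N"
    by (simp add: singular_local_relations_def pad3 pad_id_mult pad_id_inject)
qed

section \<open>Solving the braid relations\<close>

lemma mat_eq_entry: "A = B \<Longrightarrow> A $$ ij = B $$ ij"
  by simp

lemma mult_diff_eq_0_disj: "x * (y - z) = (0 :: 'a :: idom) \<Longrightarrow> x = 0 \<or> y = z"
  by simp

lemmas local3_entry_simps = local3_def scalar_prod_def eval_nat_numeral

lemma braid_local_block_cases:
  assumes braid: "braid_local_relations (mat3 a b c d e f g h k)"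
    and det: "det (mat3 a b c d e f g h k) \<noteq> 0"
  obtains (block_12) "c = 0" "f = 0" "g = 0" "h = 0" "k = 1"
    | (block_23) "a = 1" "b = 0" "c = 0" "d = 0" "g = 0"
    | (middle_row) "a = 1" "b = 0" "c = 0" "g = 0" "h = 0" "k = 1"
    | (middle_col) "a = 1" "c = 0" "d = 0" "f = 0" "g = 0" "k = 1"
proof -
  note far = braid_local_relationsD(1)[OF braid]
  note br = braid_local_relationsD(2)[OF braid]
  have c: "c = 0" and g: "g = 0" and fa: "f = 0 \<or> a = 1" and ha: "h = 0 \<or> a = 1"
    and bk: "b = 0 \<or> k = 1" and dk: "d = 0 \<or> k = 1" and fb: "f = 0 \<or> b = 0"
    and dh: "d = 0 \<or> h = 0"
    using mat_eq_entry[OF far, of "(0, 4)"] mat_eq_entry[OF far, of "(4, 0)"]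
      mat_eq_entry[OF far, of "(1, 2)"] mat_eq_entry[OF far, of "(2, 1)"]
      mat_eq_entry[OF far, of "(2, 3)"] mat_eq_entry[OF far, of "(3, 2)"]
      mat_eq_entry[OF far, of "(1, 3)"] mat_eq_entry[OF far, of "(3, 1)"]
    by (simp_all add: local3_entry_simps)
  consider "a \<noteq> 1" "k \<noteq> 1" | "a \<noteq> 1" "k = 1" | "a = 1" "k \<noteq> 1" | "a = 1" "k = 1"
    by blast
  then show thesis
  proof cases
    case 1
    then have bdfh: "b = 0" "d = 0" "f = 0" "h = 0" using fa ha bk dk by auto
    have "a * a = a"
      using mat_eq_entry[OF br, of "(0, 0)"] by (simp add: c g bdfh local3_entry_simps)
    then have "a = 0" using 1 by simp
    then show thesis using det by (simp add: det_mat3 c g bdfh)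
  next
    case 2
    then show thesis using block_12 c g fa ha by auto
  next
    case 3
    then show thesis using block_23 c g bk dk by auto
  next
    case 4
    then show thesis using block_12 block_23 middle_row middle_col c g fb dh by auto
  qed
qed

lemma block_12_braid_solutions:
  assumes braid: "braid_local_relations (mat3 a b 0 d e 0 0 0 1)"
    and det: "a * e - b * d \<noteq> 0"
    and nontriv: "\<not> (a = 1 \<and> b = 0 \<and> d = 0 \<and> e = 1)"
  obtains (M2) "a = 0" "e \<notin> {0, 1}" "b * d = 1 - e"
    | (M6) "e = 0" "a \<notin> {0, 1}" "b * d = 1 - a"
    | (M8) "a = 0" "e = 0" "b * d \<noteq> 0"
proof -
  note br = braid_local_relationsD(2)[OF braid]
  note local3_entry_simps [simp]
  note br00 = mat_eq_entry[OF br, of "(0, 0)", simplified]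
  note br01 = mat_eq_entry[OF br, of "(0, 1)", simplified]
  note br10 = mat_eq_entry[OF br, of "(1, 0)", simplified]
  note br22 = mat_eq_entry[OF br, of "(2, 2)", simplified]
  have a_cases: "a = 0 \<or> b * d = 1 - a"
    by (rule mult_diff_eq_0_disj) (use br00 in \<open>simp add: algebra_simps\<close>)
  have e_cases: "e = 0 \<or> b * d = 1 - e"
    by (rule mult_diff_eq_0_disj) (use br22 in \<open>simp add: algebra_simps\<close>)
  have b_ae: "b = 0 \<or> a * e = 0" using br01 by auto
  have d_ae: "d = 0 \<or> a * e = 0" using br10 by auto
  show thesis
  proof (cases "a = 0")
    case a0: True
    then have bd: "b * d \<noteq> 0" using det by simp
    show thesis
    proof (cases "e = 0")
      case True
      then show thesis using M8 a0 bd by blast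
    next
      case False
      then have "b * d = 1 - e" using e_cases by simp
      moreover from this have "e \<noteq> 1" using bd by auto
      ultimately show thesis using M2 a0 False by simp
    qed
  next
    case a: False
    then have bd_a: "b * d = 1 - a" using a_cases by simp
    show thesis
    proof (cases "b * d = 0")
      case True
      then have "a = 1" "e \<noteq> 0" using bd_a det by auto
      then have "b = 0" "d = 0" using b_ae d_ae by auto
      then have "e = 1" using e_cases \<open>e \<noteq> 0\<close> by simp
      then show thesis using nontriv \<open>a = 1\<close> \<open>b = 0\<close> \<open>d = 0\<close> by simp
    next
      case False
      then have "e = 0" using b_ae d_ae a by auto
      then show thesis using M6 a bd_a False by auto
    qed
  qed
qed

lemma block_23_braid_solutions:
  assumes braid: "braid_local_relations (mat3 1 0 0 0 e f 0 h k)"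
    and det: "e * k - f * h \<noteq> 0"
    and nontriv: "\<not> (e = 1 \<and> f = 0 \<and> h = 0 \<and> k = 1)"
  obtains (M1) "k = 0" "e \<notin> {0, 1}" "f * h = 1 - e"
    | (M5) "e = 0" "k \<notin> {0, 1}" "f * h = 1 - k"
    | (M7) "e = 0" "k = 0" "f * h \<noteq> 0"
proof -
  note br = braid_local_relationsD(2)[OF braid]
  note local3_entry_simps [simp]
  note br11 = mat_eq_entry[OF br, of "(1, 1)", simplified]
  note br12 = mat_eq_entry[OF br, of "(1, 2)", simplified]
  note br21 = mat_eq_entry[OF br, of "(2, 1)", simplified]
  note br22 = mat_eq_entry[OF br, of "(2, 2)", simplified]
  note br33 = mat_eq_entry[OF br, of "(3, 3)", simplified]
  have e_cases: "e = 0 \<or> f * h = 1 - e"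
    by (rule mult_diff_eq_0_disj) (use br11 in \<open>simp add: algebra_simps\<close>)
  have k_cases: "k = 0 \<or> f * h = 1 - k"
    by (rule mult_diff_eq_0_disj) (use br33 in \<open>simp add: algebra_simps\<close>)
  have efk: "e * f * k = 0" using br12 by auto
  have ehk: "e * h * k = 0" using br21 by auto
  have ek: "e * k = 0 \<or> k = e" using br22 by auto
  show thesis
  proof (cases "e = 0")
    case e0: True
    then have fh: "f * h \<noteq> 0" using det by simp
    show thesis
    proof (cases "k = 0")
      case True
      then show thesis using M7 e0 fh by blast
    next
      case False
      then have "f * h = 1 - k" using k_cases by simp
      moreover from this have "k \<noteq> 1" using fh by auto
      ultimately show thesis using M5 e0 False by simp
    qed
  next
    case e: False
    then have fh_e: "f * h = 1 - e" using e_cases by simp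
    have k0: "k = 0"
    proof (rule ccontr)
      assume "k \<noteq> 0"
      then have "f = 0" "h = 0" "k = e" using efk ehk ek e by auto
      then show False using fh_e nontriv by simp
    qed
    then have "e \<noteq> 1" using det fh_e by auto
    then show thesis using M1 k0 e fh_e by simp
  qed
qed

lemma middle_row_braid_solution:
  assumes braid: "braid_local_relations (mat3 1 0 0 d e f 0 0 1)"
    and nontriv: "\<not> (d = 0 \<and> e = 1 \<and> f = 0)"
  shows "e = - d * f"
proof -
  note br = braid_local_relationsD(2)[OF braid]
  note local3_entry_simps [simp]
  note br10 = mat_eq_entry[OF br, of "(1, 0)", simplified]
  note br11 = mat_eq_entry[OF br, of "(1, 1)", simplified]
  note br23 = mat_eq_entry[OF br, of "(2, 3)", simplified]
  have "d = 0 \<or> e = - d * f"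
    by (rule mult_diff_eq_0_disj) (use br10 in \<open>simp add: algebra_simps\<close>)
  moreover have "f = 0 \<or> e = - d * f"
    by (rule mult_diff_eq_0_disj) (use br23 in \<open>simp add: algebra_simps\<close>)
  moreover have "e = 1 \<or> e = - d * f"
    using mult_diff_eq_0_disj[of "e - 1" e "- d * f"] br11 by (simp add: algebra_simps)
  ultimately show ?thesis using nontriv by auto
qed

lemma middle_col_braid_solution:
  assumes braid: "braid_local_relations (mat3 1 b 0 0 e 0 0 h 1)"
    and nontriv: "\<not> (b = 0 \<and> e = 1 \<and> h = 0)"
  shows "e = - b * h"
proof -
  note br = braid_local_relationsD(2)[OF braid]
  note local3_entry_simps [simp]
  note br01 = mat_eq_entry[OF br, of "(0, 1)", simplified]
  note br11 = mat_eq_entry[OF br, of "(1, 1)", simplified]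
  note br32 = mat_eq_entry[OF br, of "(3, 2)", simplified]
  have "b = 0 \<or> e = - b * h" using br01 by (auto simp: eq_neg_iff_add_eq_0)
  moreover have "h = 0 \<or> e = - b * h" using br32 by (auto simp: eq_neg_iff_add_eq_0 algebra_simps)
  moreover have "e = 1 \<or> e = - b * h" using br11 by (auto simp: eq_neg_iff_add_eq_0)
  ultimately show ?thesis using nontriv by auto
qed

lemma braid_local_solutions:
  assumes braid: "braid_local_relations M" and M: "M \<in> carrier_mat 3 3"
    and det: "det M \<noteq> 0" and nontriv: "M \<noteq> 1\<^sub>m 3"
  obtains (M1) e f h where "M = mat3 1 0 0 0 e f 0 h 0" "e \<notin> {0, 1}" "f * h = 1 - e"
    | (M2) b d e where "M = mat3 0 b 0 d e 0 0 0 1" "e \<notin> {0, 1}" "b * d = 1 - e"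
    | (M3) b e h where "M = mat3 1 b 0 0 e 0 0 h 1" "e \<noteq> 0" "e = - b * h"
    | (M4) d e f where "M = mat3 1 0 0 d e f 0 0 1" "e \<noteq> 0" "e = - d * f"
    | (M5) f h k where "M = mat3 1 0 0 0 0 f 0 h k" "k \<notin> {0, 1}" "f * h = 1 - k"
    | (M6) a b d where "M = mat3 a b 0 d 0 0 0 0 1" "a \<notin> {0, 1}" "b * d = 1 - a"
    | (M7) f h where "M = mat3 1 0 0 0 0 f 0 h 0" "f * h \<noteq> 0"
    | (M8) b d where "M = mat3 0 b 0 d 0 0 0 0 1" "b * d \<noteq> 0"
proof -
  obtain a b c d e f g h k where M_eq: "M = mat3 a b c d e f g h k"
    using carrier_mat_3_3_cases[OF M] .
  note braid = braid[unfolded M_eq] and det = det[unfolded M_eq]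
  have nontriv: "\<not> (a = 1 \<and> b = 0 \<and> c = 0 \<and> d = 0 \<and> e = 1 \<and> f = 0 \<and> g = 0 \<and> h = 0 \<and> k = 1)"
    using nontriv by (auto simp: M_eq mat3_one[symmetric] mat3_eq_iff)
  from braid det show thesis
  proof (cases rule: braid_local_block_cases)
    case block_12
    then have "braid_local_relations (mat3 a b 0 d e 0 0 0 1)" "a * e - b * d \<noteq> 0"
      "\<not> (a = 1 \<and> b = 0 \<and> d = 0 \<and> e = 1)"
      using braid det nontriv by (simp_all add: det_mat3)
    then show thesis
      by (cases rule: block_12_braid_solutions) (use M2 M6 M8 M_eq block_12 in auto)
  next
    case block_23
    then have "braid_local_relations (mat3 1 0 0 0 e f 0 h k)" "e * k - f * h \<noteq> 0"
      "\<not> (e = 1 \<and> f = 0 \<and> h = 0 \<and> k = 1)"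
      using braid det nontriv by (simp_all add: det_mat3)
    then show thesis
      by (cases rule: block_23_braid_solutions) (use M1 M5 M7 M_eq block_23 in auto)
  next
    case middle_row
    then have "braid_local_relations (mat3 1 0 0 d e f 0 0 1)" "e \<noteq> 0"
      "\<not> (d = 0 \<and> e = 1 \<and> f = 0)"
      using braid det nontriv by (simp_all add: det_mat3)
    then show thesis
      using M4[of d e f] M_eq middle_row middle_row_braid_solution[of d e f] by simp
  next
    case middle_col
    then have "braid_local_relations (mat3 1 b 0 0 e 0 0 h 1)" "e \<noteq> 0"
      "\<not> (b = 0 \<and> e = 1 \<and> h = 0)"
      using braid det nontriv by (simp_all add: det_mat3)
    then show thesis
      using M3[of b e h] M_eq middle_col middle_col_braid_solution[of b e h] by simp
  qed
qed

section \<open>Solving for the singular generator\<close>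

lemma linear_combination:
  fixes c :: "'a :: idom"
  assumes "c \<noteq> 0" "L = R" "c * (X - Y) = q * (L - R)"
  shows "X = Y"
  using assms by simp

lemma linear_combination2:
  fixes c :: "'a :: idom"
  assumes "c \<noteq> 0" "L = R" "L' = R'" "c * (X - Y) = p * (L - R) + q * (L' - R')"
  shows "X = Y"
  using assms by simp

lemma singular_local_relations_first_row:
  assumes "singular_local_relations (mat3 1 0 0 d e f g h k) (mat3 x11 x12 x13 x21 x22 x23 x31 x32 x33)"
  shows "x11 = 1" "x12 = 0" "x13 = 0"
proof -
  note rel = singular_local_relationsD(2)[OF assms]
  show "x11 = 1" "x12 = 0" "x13 = 0"
    using mat_eq_entry[OF rel, of "(0, 0)"] mat_eq_entry[OF rel, of "(0, 1)"]
      mat_eq_entry[OF rel, of "(0, 2)"]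
    by (simp_all add: local3_entry_simps)
qed

lemma singular_local_relations_first_col:
  assumes "singular_local_relations (mat3 1 b c 0 e f 0 h k) (mat3 x11 x12 x13 x21 x22 x23 x31 x32 x33)"
  shows "x11 = 1" "x21 = 0" "x31 = 0"
proof -
  note rel = singular_local_relationsD(3)[OF assms]
  show "x11 = 1" "x21 = 0" "x31 = 0"
    using mat_eq_entry[OF rel, of "(0, 0)"] mat_eq_entry[OF rel, of "(1, 0)"]
      mat_eq_entry[OF rel, of "(2, 0)"]
    by (simp_all add: local3_entry_simps)
qed

lemma singular_local_relations_last_row:
  assumes "singular_local_relations (mat3 a b c d e f 0 0 1) (mat3 x11 x12 x13 x21 x22 x23 x31 x32 x33)"
  shows "x31 = 0" "x32 = 0" "x33 = 1"
proof -
  note rel = singular_local_relationsD(3)[OF assms]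
  show "x31 = 0" "x32 = 0" "x33 = 1"
    using mat_eq_entry[OF rel, of "(3, 1)"] mat_eq_entry[OF rel, of "(3, 2)"]
      mat_eq_entry[OF rel, of "(3, 3)"]
    by (simp_all add: local3_entry_simps)
qed

lemma singular_local_relations_last_col:
  assumes "singular_local_relations (mat3 a b 0 d e 0 g h 1) (mat3 x11 x12 x13 x21 x22 x23 x31 x32 x33)"
  shows "x13 = 0" "x23 = 0" "x33 = 1"
proof -
  note rel = singular_local_relationsD(2)[OF assms]
  show "x13 = 0" "x23 = 0" "x33 = 1"
    using mat_eq_entry[OF rel, of "(1, 3)"] mat_eq_entry[OF rel, of "(2, 3)"]
      mat_eq_entry[OF rel, of "(3, 3)"]
    by (simp_all add: local3_entry_simps)
qed

lemma family_1_of_singular_local_relations: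
  assumes e: "e \<notin> {0, 1}" and fh: "f * h = 1 - e"
    and rel: "singular_local_relations (mat3 1 0 0 0 e f 0 h 0) (mat3 x11 x12 x13 x21 x22 x23 x31 x32 x33)"
  shows "family 1 (mat3 1 0 0 0 e f 0 h 0) (mat3 x11 x12 x13 x21 x22 x23 x31 x32 x33)"
proof -
  have first: "x11 = 1" "x12 = 0" "x13 = 0" "x21 = 0" "x31 = 0"
    using singular_local_relations_first_row[OF rel] singular_local_relations_first_col[OF rel] by simp_all
  have e0: "e \<noteq> 0" and e1: "e - 1 \<noteq> 0" and f: "f \<noteq> 0" using e fh by auto
  note local3_entry_simps [simp]
  note comm = singular_local_relationsD(1)[OF rel] and mixr = singular_local_relationsD(2)[OF rel]
  note comm11 = mat_eq_entry[OF comm, of "(1, 1)", simplified first]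
  note mixr11 = mat_eq_entry[OF mixr, of "(1, 1)", simplified first]
  note mixr12 = mat_eq_entry[OF mixr, of "(1, 2)", simplified first]
  have x22: "x22 = 1 - f * x32"
    by (rule linear_combination[OF e0 mixr11, where q = 1]) (simp add: algebra_simps)
  have x23: "x23 = f - f * x33"
    by (rule linear_combination[OF e0 mixr12, where q = 1]) (simp add: algebra_simps)
  have x23': "(e - 1) * x23 = - (f^2 * x32)"
    by (rule linear_combination2[OF one_neq_zero comm11 fh, where p = "- f" and q = x23])
      (simp add: algebra_simps power2_eq_square)
  have "(e - 1) * x33 = -1 + e + f * x32"
    by (rule linear_combination2[OF f x23 x23', where p = "e - 1" and q = "-1"])
      (simp add: algebra_simps power2_eq_square)
  then have "x33 = (-1 + e + f * x32) / (e - 1)"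
    using e1 by (simp add: field_simps)
  moreover have "x23 = - (f^2 * x32) / (e - 1)"
    using x23' e1 by (simp add: field_simps)
  moreover have "h = (1 - e) / f"
    using f fh by (simp add: field_simps)
  ultimately show ?thesis
    using e f x22 by (simp add: family_def first mat3_eq_iff)
qed

lemma family_2_of_singular_local_relations:
  assumes e: "e \<notin> {0, 1}" and bd: "b * d = 1 - e"
    and rel: "singular_local_relations (mat3 0 b 0 d e 0 0 0 1) (mat3 x11 x12 x13 x21 x22 x23 x31 x32 x33)"
  shows "family 2 (mat3 0 b 0 d e 0 0 0 1) (mat3 x11 x12 x13 x21 x22 x23 x31 x32 x33)"
proof -
  have last: "x13 = 0" "x23 = 0" "x31 = 0" "x32 = 0" "x33 = 1"
    using singular_local_relations_last_col[OF rel] singular_local_relations_last_row[OF rel] by simp_all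
  have b: "b \<noteq> 0" and e0: "e \<noteq> 0" and e1: "e - 1 \<noteq> 0" using e bd by auto
  note local3_entry_simps [simp]
  note comm = singular_local_relationsD(1)[OF rel] and mixr = singular_local_relationsD(2)[OF rel]
  note comm00 = mat_eq_entry[OF comm, of "(0, 0)", simplified last]
  note mixr12 = mat_eq_entry[OF mixr, of "(1, 2)", simplified last]
  note mixr22 = mat_eq_entry[OF mixr, of "(2, 2)", simplified last]
  have x12: "x12 = b - b * x11"
    by (rule linear_combination[OF e0 mixr12, where q = "-1"]) (simp add: algebra_simps)
  have x22: "x22 = 1 - b * x21"
    by (rule linear_combination[OF e0 mixr22, where q = "-1"]) (simp add: algebra_simps)
  have x21: "x21 = d * (1 - x11)"
    by (rule linear_combination[OF b comm00, where q = "-1"]) (simp add: x12 algebra_simps)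
  have "(e - 1) * x11 = b * x21 + e - 1"
    by (rule linear_combination[OF one_neq_zero bd, where q = "x11 - 1"]) (simp add: x21 algebra_simps)
  then have "x11 = (b * x21 + e - 1) / (e - 1)"
    using e1 by (simp add: eq_divide_eq mult.commute)
  moreover have "(e - 1) * x12 = - (b^2 * x21)"
    by (rule linear_combination[OF one_neq_zero bd, where q = "b * (1 - x11)"])
      (simp add: x12 x21 algebra_simps power2_eq_square)
  then have "x12 = - (b^2 * x21) / (e - 1)"
    using e1 by (simp add: field_simps)
  moreover have "d = (1 - e) / b"
    using b bd by (simp add: eq_divide_eq mult.commute)
  ultimately show ?thesis
    using b e x22 by (simp add: family_def last mat3_eq_iff)
qed

lemma family_3_of_singular_local_relations:
  assumes e: "e \<noteq> 0" and ebh: "e = - b * h"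
    and rel: "singular_local_relations (mat3 1 b 0 0 e 0 0 h 1) (mat3 x11 x12 x13 x21 x22 x23 x31 x32 x33)"
  shows "family 3 (mat3 1 b 0 0 e 0 0 h 1) (mat3 x11 x12 x13 x21 x22 x23 x31 x32 x33)"
proof -
  have outer: "x11 = 1" "x21 = 0" "x31 = 0" "x13 = 0" "x23 = 0" "x33 = 1"
    using singular_local_relations_first_col[OF rel] singular_local_relations_last_col[OF rel] by simp_all
  have h: "h \<noteq> 0" using e ebh by auto
  note local3_entry_simps [simp]
  note comm = singular_local_relationsD(1)[OF rel] and mixl = singular_local_relationsD(3)[OF rel]
  note comm01 = mat_eq_entry[OF comm, of "(0, 1)", simplified outer]
  note mixl32 = mat_eq_entry[OF mixl, of "(3, 2)", simplified outer]
  have x22: "e * x22 = e - e * h * x12 + h * x12"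
    by (rule linear_combination2[OF one_neq_zero comm01 ebh, where p = h and q = "x22 - 1"])
      (simp add: algebra_simps)
  have "e * x32 = - (h^2 * x12)"
    by (rule linear_combination2[OF one_neq_zero mixl32 x22, where p = e and q = "- h"])
      (simp add: algebra_simps power2_eq_square)
  then have "x32 = - (h^2 * x12) / e"
    using e by (simp add: field_simps)
  moreover have "x22 = 1 - h * x12 + h * x12 / e"
    using x22 e by (simp add: field_simps)
  moreover have "b = - e / h"
    using h ebh by (simp add: field_simps)
  ultimately show ?thesis
    using e h by (simp add: family_def outer mat3_eq_iff)
qed

lemma family_4_of_singular_local_relations:
  assumes e: "e \<noteq> 0" and edf: "e = - d * f"
    and rel: "singular_local_relations (mat3 1 0 0 d e f 0 0 1) (mat3 x11 x12 x13 x21 x22 x23 x31 x32 x33)"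
  shows "family 4 (mat3 1 0 0 d e f 0 0 1) (mat3 x11 x12 x13 x21 x22 x23 x31 x32 x33)"
proof -
  have outer: "x11 = 1" "x12 = 0" "x13 = 0" "x31 = 0" "x32 = 0" "x33 = 1"
    using singular_local_relations_first_row[OF rel] singular_local_relations_last_row[OF rel] by simp_all
  have f: "f \<noteq> 0" using e edf by auto
  note local3_entry_simps [simp]
  note comm = singular_local_relationsD(1)[OF rel] and mixr = singular_local_relationsD(2)[OF rel]
  note comm10 = mat_eq_entry[OF comm, of "(1, 0)", simplified outer]
  note mixr23 = mat_eq_entry[OF mixr, of "(2, 3)", simplified outer]
  have x22: "e * x22 = e - e * f * x21 + f * x21"
    by (rule linear_combination2[OF one_neq_zero comm10 edf, where p = "- f" and q = "x22 - 1"])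
      (simp add: algebra_simps)
  have "e * x23 = - (f^2 * x21)"
    by (rule linear_combination2[OF one_neq_zero mixr23 x22, where p = "- e" and q = "- f"])
      (simp add: algebra_simps power2_eq_square)
  then have "x23 = - (f^2 * x21) / e"
    using e by (simp add: field_simps)
  moreover have "x22 = 1 - f * x21 + f * x21 / e"
    using x22 e by (simp add: field_simps)
  moreover have "d = - e / f"
    using f edf by (simp add: field_simps)
  ultimately show ?thesis
    using e f by (simp add: family_def outer mat3_eq_iff)
qed

lemma family_5_of_singular_local_relations:
  assumes k: "k \<notin> {0, 1}" and fh: "f * h = 1 - k"
    and rel: "singular_local_relations (mat3 1 0 0 0 0 f 0 h k) (mat3 x11 x12 x13 x21 x22 x23 x31 x32 x33)"
  shows "family 5 (mat3 1 0 0 0 0 f 0 h k) (mat3 x11 x12 x13 x21 x22 x23 x31 x32 x33)"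
proof -
  have first: "x11 = 1" "x12 = 0" "x13 = 0" "x21 = 0" "x31 = 0"
    using singular_local_relations_first_row[OF rel] singular_local_relations_first_col[OF rel] by simp_all
  have k0: "k \<noteq> 0" using k by simp
  note local3_entry_simps [simp]
  note mixr = singular_local_relationsD(2)[OF rel] and mixl = singular_local_relationsD(3)[OF rel]
  note mixr23 = mat_eq_entry[OF mixr, of "(2, 3)", simplified first]
  note mixr33 = mat_eq_entry[OF mixr, of "(3, 3)", simplified first]
  note mixl32 = mat_eq_entry[OF mixl, of "(3, 2)", simplified first]
  have x23: "x23 = f - f * x22"
    by (rule linear_combination[OF k0 mixr23, where q = "-1"]) (simp add: algebra_simps)
  have x32: "x32 = h - h * x22"
    by (rule linear_combination[OF k0 mixl32, where q = 1]) (simp add: algebra_simps)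
  have x33: "x33 = f * h * (x22 - 1) + 1"
    by (rule linear_combination[OF k0 mixr33, where q = "-1"]) (simp add: x32 algebra_simps)
  have "k = 1 - f * h" "f * h \<noteq> 0" "h * f \<noteq> 1" using k fh by (auto simp: mult.commute)
  then show ?thesis
    by (simp add: family_def first x23 x32 x33 mat3_eq_iff)
qed

lemma family_6_of_singular_local_relations:
  assumes a: "a \<notin> {0, 1}" and bd: "b * d = 1 - a"
    and rel: "singular_local_relations (mat3 a b 0 d 0 0 0 0 1) (mat3 x11 x12 x13 x21 x22 x23 x31 x32 x33)"
  shows "family 6 (mat3 a b 0 d 0 0 0 0 1) (mat3 x11 x12 x13 x21 x22 x23 x31 x32 x33)"
proof -
  have last: "x13 = 0" "x23 = 0" "x31 = 0" "x32 = 0" "x33 = 1"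
    using singular_local_relations_last_col[OF rel] singular_local_relations_last_row[OF rel] by simp_all
  have a0: "a \<noteq> 0" and b: "b \<noteq> 0" using a bd by auto
  note local3_entry_simps [simp]
  note comm = singular_local_relationsD(1)[OF rel] and mixr = singular_local_relationsD(2)[OF rel]
  note comm00 = mat_eq_entry[OF comm, of "(0, 0)", simplified last]
  note mixr00 = mat_eq_entry[OF mixr, of "(0, 0)", simplified last]
  note mixr01 = mat_eq_entry[OF mixr, of "(0, 1)", simplified last]
  have x12: "x12 = b - b * x22"
    by (rule linear_combination[OF a0 mixr01, where q = 1]) (simp add: algebra_simps)
  have x21: "x21 = d - d * x22"
    by (rule linear_combination[OF b comm00, where q = "-1"]) (simp add: x12 algebra_simps)
  have x11: "x11 = b * d * (x22 - 1) + 1"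
    by (rule linear_combination[OF a0 mixr00, where q = 1]) (simp add: x21 algebra_simps)
  have "a = 1 - b * d" "b * d \<noteq> 0" "b * d \<noteq> 1" using a bd by auto
  then show ?thesis
    by (simp add: family_def last x11 x12 x21 mat3_eq_iff)
qed

lemma family_7_of_singular_local_relations:
  assumes fh: "f * h \<noteq> 0"
    and rel: "singular_local_relations (mat3 1 0 0 0 0 f 0 h 0) (mat3 x11 x12 x13 x21 x22 x23 x31 x32 x33)"
  shows "family 7 (mat3 1 0 0 0 0 f 0 h 0) (mat3 x11 x12 x13 x21 x22 x23 x31 x32 x33)"
proof -
  have first: "x11 = 1" "x12 = 0" "x13 = 0" "x21 = 0" "x31 = 0"
    using singular_local_relations_first_row[OF rel] singular_local_relations_first_col[OF rel] by simp_all
  note local3_entry_simps [simp]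
  note comm = singular_local_relationsD(1)[OF rel]
  have "x33 = x22" using mat_eq_entry[OF comm, of "(1, 2)"] fh by auto
  moreover have "x32 = h * x23 / f"
    using mat_eq_entry[OF comm, of "(1, 1)"] fh by (simp add: eq_divide_eq algebra_simps)
  ultimately show ?thesis
    using fh by (simp add: family_def first mat3_eq_iff)
qed

lemma family_8_of_singular_local_relations:
  assumes bd: "b * d \<noteq> 0"
    and rel: "singular_local_relations (mat3 0 b 0 d 0 0 0 0 1) (mat3 x11 x12 x13 x21 x22 x23 x31 x32 x33)"
  shows "family 8 (mat3 0 b 0 d 0 0 0 0 1) (mat3 x11 x12 x13 x21 x22 x23 x31 x32 x33)"
proof -
  have last: "x13 = 0" "x23 = 0" "x31 = 0" "x32 = 0" "x33 = 1"
    using singular_local_relations_last_col[OF rel] singular_local_relations_last_row[OF rel] by simp_all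
  note local3_entry_simps [simp]
  note comm = singular_local_relationsD(1)[OF rel]
  have "x22 = x11" using mat_eq_entry[OF comm, of "(0, 1)"] bd by auto
  moreover have "x21 = d * x12 / b"
    using mat_eq_entry[OF comm, of "(0, 0)"] bd by (simp add: eq_divide_eq algebra_simps)
  ultimately show ?thesis
    using bd by (simp add: family_def last mat3_eq_iff)
qed

lemma det_nonzero_of_invertible_local3:
  assumes "invertible_mat (local3 n 1 M)" "2 \<le> n" "M \<in> carrier_mat 3 3"
  shows "det M \<noteq> 0"
  using invertible_mat_det_nonzero[OF assms(1) local3_carrier]
  unfolding local3_1_pad_id[OF assms(2,3)] det_pad_id[OF assms(3)] .

lemma singular_local_solutions:
  assumes braid: "braid_local_relations M" and sing: "singular_local_relations M N"
    and M: "M \<in> carrier_mat 3 3" and N: "N \<in> carrier_mat 3 3"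
    and det: "det M \<noteq> 0" and nontriv: "M \<noteq> 1\<^sub>m 3"
  shows "\<exists>j \<in> {1..8}. family j M N"
proof -
  obtain x11 x12 x13 x21 x22 x23 x31 x32 x33 where N_eq: "N = mat3 x11 x12 x13 x21 x22 x23 x31 x32 x33"
    using carrier_mat_3_3_cases[OF N] .
  note sing = sing[unfolded N_eq]
  from braid M det nontriv show ?thesis
  proof (cases rule: braid_local_solutions)
    case (M1 e f h)
    with sing show ?thesis
      by (auto simp: N_eq intro!: bexI[of _ 1] family_1_of_singular_local_relations)
  next
    case (M2 b d e)
    with sing show ?thesis
      by (auto simp: N_eq intro!: bexI[of _ 2] family_2_of_singular_local_relations)
  next
    case (M3 b e h)
    with sing show ?thesis
      by (auto simp: N_eq intro!: bexI[of _ 3] family_3_of_singular_local_relations)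
  next
    case (M4 d e f)
    with sing show ?thesis
      by (auto simp: N_eq intro!: bexI[of _ 4] family_4_of_singular_local_relations)
  next
    case (M5 f h k)
    with sing show ?thesis
      by (auto simp: N_eq intro!: bexI[of _ 5] family_5_of_singular_local_relations)
  next
    case (M6 a b d)
    with sing show ?thesis
      by (auto simp: N_eq intro!: bexI[of _ 6] family_6_of_singular_local_relations)
  next
    case (M7 f h)
    with sing show ?thesis
      by (auto simp: N_eq intro!: bexI[of _ 7] family_7_of_singular_local_relations)
  next
    case (M8 b d)
    with sing show ?thesis
      by (auto simp: N_eq intro!: bexI[of _ 8] family_8_of_singular_local_relations)
  qed
qed

theorem theorem4p2:
  fixes n :: nat and \<nu> \<nu>' :: "gen list \<Rightarrow> complex mat" and M N :: "complex mat"
  assumes "n \<ge> 4"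
    and nu_rep: "is_pres_rep (gens_B n) (braid_rels n) (n+1) \<nu>"
    and nu_GL: "\<forall>w \<in> lists (gens_B n). invertible_mat (\<nu> w)"
    and M: "M \<in> carrier_mat 3 3" "\<forall>i \<in> idx n. \<nu> [Sg i] = local3 n i M"
    and nontriv: "\<exists>i \<in> idx n. \<nu> [Sg i] \<noteq> 1\<^sub>m (n+1)"
    and nu'_rep: "is_pres_rep (gens_SM n) (sm_rels n) (n+1) \<nu>'"
    and N: "N \<in> carrier_mat 3 3"
    and ext: "\<forall>i \<in> idx n. \<nu>' [Sg i] = \<nu> [Sg i] \<and> \<nu>' [Tg i] = local3 n i N"
  shows "(\<exists>j \<in> {1..8}. \<exists>Mj Nj. family j Mj Nj \<and> equiv_to_local n \<nu>' Mj Nj) \<and>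
         ((\<forall>i \<in> idx n. invertible_mat (\<nu>' [Tg i])) \<longrightarrow>
            (\<exists>\<rho>. is_pres_rep (gens_SB n) (sb_rels n) (n+1) \<rho> \<and>
                  (\<forall>w \<in> lists (gens_SM n). \<rho> w = \<nu>' w)))"
proof -
  have gen: "\<forall>i \<in> idx n. \<nu>' [Sg i] = local3 n i M \<and> \<nu>' [Tg i] = local3 n i N"
    using ext M(2) by simp
  have rels: "braid_local_relations M" "singular_local_relations M N"
    using local_relations_of_rep[OF \<open>n \<ge> 4\<close> nu'_rep gen M(1) N] by auto
  have "1 \<in> idx n" using \<open>n \<ge> 4\<close> by (simp add: idx_def)
  then have "[Sg 1] \<in> lists (gens_B n)" "\<nu> [Sg 1] = local3 n 1 M"
    using M(2) by (auto simp: gens_B_def)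
  then have "invertible_mat (local3 n 1 M)"
    using nu_GL by metis
  then have "det M \<noteq> 0"
    using det_nonzero_of_invertible_local3 \<open>n \<ge> 4\<close> M(1) by simp
  moreover have "M \<noteq> 1\<^sub>m 3" using nontriv M(2) local3_one by auto
  ultimately obtain j where "j \<in> {1..8}" "family j M N"
    using singular_local_solutions[OF rels M(1) N] by blast
  then show ?thesis
    using equiv_to_local_refl[OF gen] is_pres_rep_sb_extension[OF nu'_rep] by blast
qed

end
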